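(* Let $\Gamma=(V,E,w)$ be a directed network with walk matrix $W$. Let $A=\{a_1,\dots,a_k\}\subset V$ and $B=\{b_1,\dots,b_k\}\subset V$ be totally ordered subsets of the same cardinality $k$ (not necessarily disjoint), and $W_{A,B}=(W(a_i,b_j))_{i,j=1}^k$. Then, as formal power series in the edge weights, $$\det(W_{A,B})=\sum_{\sigma\in S_k}\operatorname{sgn}(\sigma)\sum_{(\pi_1,\dots,\pi_k)} w(\pi_1)\cdots w(\pi_k),$$ where the inner sum runs over all families of walks $\pi_1,\dots,\pi_k$ with $\pi_i$ a walk from $a_i$ to $b_{\sigma(i)}$ such that for all $1\le i<j\le k$ the walk $\pi_j$ has no vertex in common with the loop-erased part $\mathrm{LE}(\pi_i)$.
   Context: A directed network $\Gamma=(V,E,w)$ is a directed graph with vertex set $V$ and edge set $E$ (loops and multiple edges allowed) together with a family of commuting formal variables $\{w(e)\}_{e\in E}$. A walk $\pi$ of length $m$ from $a$ to $b$ is a sequence $a=a_0\xrightarrow{e_1}a_1\xrightarrow{e_2}\cdots\xrightarrow{e_m}a_m=b$ with each $e_i$ an edge from $a_{i-1}$ to $a_i$; its weight is $w(\pi)=\prod_i w(e_i)$, the length-$0$ walk having weight $1$. It is assumed that between any two vertices there are at most countably many walks of each fixed length, so that $W(a,b)=\sum_{\pi:a\to b}w(\pi)$ (sum over all walks from $a$ to $b$, including length 0 if $a=b$) is a well-defined formal power series; $W=(W(a,b))_{a,b\in V}$ is the walk matrix. A walk "has a vertex in common" with another if some vertex $a_i$ of one equals some vertex of the other. Loop erasure: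 if all vertices $a_0,\dots,a_m$ of $\pi$ are distinct, $\mathrm{LE}(\pi)=\pi$; otherwise take $a_i=a_j$ ($i<j$) with $j$ as small as possible, delete the segment $a_i\xrightarrow{e_{i+1}}\cdots\xrightarrow{e_j}a_j$ from $\pi$ to obtain $\pi'$, and set $\mathrm{LE}(\pi)=\mathrm{LE}(\pi')$. $\mathrm{LE}(\pi)$ is a self-avoiding walk from $a_0$ to $a_m$. *)

theory Defs
  imports Main "HOL-Library.Multiset" "HOL-Combinatorics.Permutations"
begin

text \<open>A directed network is given by a vertex type 'v, an edge type 'e and
  source/target maps src, tgt :: 'e => 'v (loops and multiple edges allowed).
  The weight w(e) of edge e is a formal commuting variable; a monomial in these
  variables is a multiset of edges. A walk starting at a is its list of edges.\<close>

fun is_walk :: "('e \<Rightarrow> 'v) \<Rightarrow> ('e \<Rightarrow> 'v) \<Rightarrow> 'v \<Rightarrow> 'e list \<Rightarrow> 'v \<Rightarrow> bool" where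
  "is_walk src tgt a [] b = (a = b)"
| "is_walk src tgt a (e # es) b = (src e = a \<and> is_walk src tgt (tgt e) es b)"

definition walk_verts :: "('e \<Rightarrow> 'v) \<Rightarrow> 'v \<Rightarrow> 'e list \<Rightarrow> 'v list" where
  "walk_verts tgt a es = a # map tgt es"

text \<open>Loop erasure, exactly as in the paper: if the vertices are not distinct,
  take the smallest j such that a_i = a_j for some i < j, delete the segment
  from a_i to a_j (edges e_(i+1), ..., e_j) and recurse.  (For this minimal j
  the index i is unique, since a_0..a_(j-1) are distinct; we pick it by LEAST.)\<close>

definition le_j :: "'v list \<Rightarrow> nat" where
  "le_j vs = (LEAST j. j < length vs \<and> (\<exists>i<j. vs ! i = vs ! j))"

definition le_i :: "'v list \<Rightarrow> nat" where
  "le_i vs = (LEAST i. i < le_j vs \<and> vs ! i = vs ! le_j vs)"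

lemma le_j_props:
  assumes "\<not> distinct vs"
  shows "le_j vs < length vs \<and> (\<exists>i<le_j vs. vs ! i = vs ! le_j vs)"
proof -
  from assms obtain i j where ij: "i < length vs" "j < length vs" "i \<noteq> j" "vs ! i = vs ! j"
    by (auto simp: distinct_conv_nth)
  define i' where "i' = min i j"
  define j' where "j' = max i j"
  have "i' < j'" "j' < length vs" "vs ! i' = vs ! j'"
    using ij by (auto simp: i'_def j'_def min_def max_def)
  then have "\<exists>j. j < length vs \<and> (\<exists>i<j. vs ! i = vs ! j)" by blast
  then show ?thesis unfolding le_j_def by (rule LeastI_ex)
qed

lemma le_i_props:
  assumes "\<not> distinct vs"
  shows "le_i vs < le_j vs \<and> vs ! le_i vs = vs ! le_j vs"
proof -
  from le_j_props[OF assms]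
  have "\<exists>i. i < le_j vs \<and> vs ! i = vs ! le_j vs" by blast
  then show ?thesis unfolding le_i_def by (rule LeastI_ex)
qed

function loop_erase :: "('e \<Rightarrow> 'v) \<Rightarrow> 'v \<Rightarrow> 'e list \<Rightarrow> 'e list" where
  "loop_erase tgt a es =
     (if distinct (walk_verts tgt a es) then es
      else loop_erase tgt a
             (take (le_i (walk_verts tgt a es)) es @ drop (le_j (walk_verts tgt a es)) es))"
  by pat_completeness auto
termination
proof (relation "measure (\<lambda>(tgt, a, es). length es)")
  fix tgt :: "'e \<Rightarrow> 'v" and a es
  assume nd: "\<not> distinct (walk_verts tgt a es)"
  let ?vs = "walk_verts tgt a es"
  have "le_j ?vs < length ?vs" "le_i ?vs < le_j ?vs"
    using le_j_props[OF nd] le_i_props[OF nd] by auto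
  then have "le_j ?vs \<le> length es" "le_i ?vs < le_j ?vs"
    by (auto simp: walk_verts_def)
  then show "((tgt, a, take (le_i ?vs) es @ drop (le_j ?vs) es), (tgt, a, es))
               \<in> measure (\<lambda>(tgt, a, es). length es)"
    by auto
qed auto

declare loop_erase.simps[simp del]

text \<open>A formal power series with integer coefficients in the variables w(e) is
  its coefficient function on monomials (multisets of edges).\<close>
type_synonym 'e mps = "'e multiset \<Rightarrow> int"

definition mps_one :: "'e mps" where
  "mps_one = (\<lambda>m. if m = {#} then 1 else 0)"

definition mps_mult :: "'e mps \<Rightarrow> 'e mps \<Rightarrow> 'e mps" where
  "mps_mult f g = (\<lambda>m. \<Sum>m1\<in>{m1. m1 \<subseteq># m}. f m1 * g (m - m1))"

definition mps_prod_list :: "'e mps list \<Rightarrow> 'e mps" where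
  "mps_prod_list fs = foldr mps_mult fs mps_one"

definition mps_det :: "nat \<Rightarrow> (nat \<Rightarrow> nat \<Rightarrow> 'e mps) \<Rightarrow> 'e mps" where
  "mps_det k M = (\<lambda>m. \<Sum>\<sigma>\<in>{\<sigma>. \<sigma> permutes {..<k}}.
      of_int (sign \<sigma>) * mps_prod_list (map (\<lambda>i. M i (\<sigma> i)) [0..<k]) m)"

text \<open>Walk matrix entry W(a,b) = sum over walks a -> b of w(pi): the coefficient
  of monomial m is the number of walks from a to b with edge multiset m.\<close>
definition walk_series :: "('e \<Rightarrow> 'v) \<Rightarrow> ('e \<Rightarrow> 'v) \<Rightarrow> 'v \<Rightarrow> 'v \<Rightarrow> 'e mps" where
  "walk_series src tgt a b = (\<lambda>m. int (card {es. is_walk src tgt a es b \<and> mset es = m}))"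

definition LE_families ::
  "('e \<Rightarrow> 'v) \<Rightarrow> ('e \<Rightarrow> 'v) \<Rightarrow> nat \<Rightarrow> (nat \<Rightarrow> 'v) \<Rightarrow> (nat \<Rightarrow> 'v) \<Rightarrow> (nat \<Rightarrow> nat) \<Rightarrow> 'e list list set" where
  "LE_families src tgt k a b \<sigma> =
     {ps. length ps = k \<and> (\<forall>i<k. is_walk src tgt (a i) (ps ! i) (b (\<sigma> i))) \<and>
          (\<forall>i j. i < j \<and> j < k \<longrightarrow>
             set (walk_verts tgt (a j) (ps ! j)) \<inter>
             set (walk_verts tgt (a i) (loop_erase tgt (a i) (ps ! i))) = {})}"

definition family_series ::
  "('e \<Rightarrow> 'v) \<Rightarrow> ('e \<Rightarrow> 'v) \<Rightarrow> nat \<Rightarrow> (nat \<Rightarrow> 'v) \<Rightarrow> (nat \<Rightarrow> 'v) \<Rightarrow> (nat \<Rightarrow> nat) \<Rightarrow> 'e mps" where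
  "family_series src tgt k a b \<sigma> =
     (\<lambda>m. int (card {ps \<in> LE_families src tgt k a b \<sigma>. sum_list (map mset ps) = m}))"

end

theory Submission
  imports Defs "HOL-Library.Disjoint_Sets"
begin

(*
  Expanding the determinant by the Leibniz formula, the coefficient of a monomial m in
  det W_{A,B} is the signed number of pairs (sigma, (pi_1, ..., pi_k)) where pi_i is a walk
  from a_i to b_(sigma i) and the edges of all the walks form the multiset m. The pairs that
  violate the loop-erasure condition cancel in pairs under a sign-reversing involution: take
  the least i such that a later walk meets LE(pi_i), the first vertex v along LE(pi_i) met by
  a later walk, and the least j > i such that pi_j passes through v; exchange the tails of
  pi_i and pi_j after their last visits to v, and compose sigma with the transposition (i j).
  After its last visit to v, pi_i never returns to the part of LE(pi_i) up to v (that would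
  erase v for good), and by the choice of v neither does the tail of pi_j. So LE of the new
  pi_i begins with the same part, the same i, v and j are selected again, and the exchange is
  an involution.
*)

lemma takeWhile_neq_append_Cons:
  "x \<notin> set ys \<Longrightarrow> takeWhile (\<lambda>u. u \<noteq> x) (ys @ x # zs) = ys"
  by (induction ys) auto

lemma length_takeWhile_neq_less:
  "x \<in> set xs \<Longrightarrow> length (takeWhile (\<lambda>u. u \<noteq> x) xs) < length xs"
  by (induction xs) auto

lemma last_notin_takeWhile_neq:
  assumes "distinct xs" "x \<in> set xs"
  shows "last xs \<notin> set (takeWhile (\<lambda>u. u \<noteq> x) xs)"
proof -
  obtain ys zs where xs: "xs = ys @ x # zs" "x \<notin> set ys"
    using split_list_first[OF assms(2)] by blast
  then have "last xs \<in> set (x # zs)" by simp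
  then show ?thesis using assms(1) xs by (auto simp: takeWhile_neq_append_Cons)
qed

lemma length_takeWhile_neq_nth:
  assumes "distinct xs" "i < length xs"
  shows "length (takeWhile (\<lambda>u. u \<noteq> xs ! i) xs) = i"
proof -
  have "xs = take i xs @ xs ! i # drop (Suc i) xs" using assms(2) by (simp add: id_take_nth_drop)
  moreover have "xs ! i \<notin> set (take i xs)"
    using assms by (simp add: in_set_conv_nth nth_eq_iff_index_eq)
  ultimately show ?thesis
    using assms(2) by (metis takeWhile_neq_append_Cons length_take min_absorb2 less_imp_le)
qed

lemma in_set_drop_iff: "x \<in> set (drop n xs) \<longleftrightarrow> (\<exists>p. n \<le> p \<and> p < length xs \<and> xs ! p = x)"
proof
  assume "x \<in> set (drop n xs)"
  then obtain q where "q < length xs - n" "drop n xs ! q = x" by (auto simp: in_set_conv_nth)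
  then show "\<exists>p. n \<le> p \<and> p < length xs \<and> xs ! p = x" by (intro exI[of _ "n + q"]) auto
next
  assume "\<exists>p. n \<le> p \<and> p < length xs \<and> xs ! p = x"
  then obtain p where "n \<le> p" "p < length xs" "xs ! p = x" by blast
  then have "p - n < length (drop n xs)" "drop n xs ! (p - n) = x" by auto
  then show "x \<in> set (drop n xs)" by (metis nth_mem)
qed

lemma find_append_Cons:
  "(\<forall>u\<in>set xs. \<not> P u) \<Longrightarrow> P x \<Longrightarrow> find P (xs @ x # ys) = Some x"
  by (induction xs) auto

lemma find_append_Cons_SomeD:
  "find P (xs @ x # ys) = Some x \<Longrightarrow> x \<notin> set xs \<Longrightarrow> u \<in> set xs \<Longrightarrow> \<not> P u"
  by (induction xs) (auto split: if_splits)

lemma sum_list_map_update: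
  fixes f :: "'a \<Rightarrow> 'b::comm_monoid_add"
  shows "i < length xs \<Longrightarrow> sum_list (map f (xs[i := x])) + f (xs ! i) = sum_list (map f xs) + f x"
  by (induction xs arbitrary: i) (auto simp: ac_simps split: nat.split)

lemma mset_subset_eq_sum_list: "x \<in> set xs \<Longrightarrow> f x \<subseteq># sum_list (map f xs)"
  by (induction xs) (auto intro: subset_mset.order_trans[OF _ mset_subset_eq_add_right])

lemma finite_lists_mset_subset_eq: "finite {xs. mset xs \<subseteq># m}"
proof (rule finite_subset)
  show "{xs. mset xs \<subseteq># m} \<subseteq> {xs. set xs \<subseteq> set_mset m \<and> length xs \<le> size m}"
    by (auto dest: size_mset_mono mset_subset_eqD)
qed (simp add: finite_lists_length_le)

lemma finite_submultisets: "finite {m'. m' \<subseteq># m}"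
proof (rule finite_surj[OF finite_lists_mset_subset_eq])
  show "{m'. m' \<subseteq># m} \<subseteq> mset ` {xs. mset xs \<subseteq># m}"
    by (auto simp: image_iff) (metis ex_mset)
qed

lemma walk_verts_append: "walk_verts tgt a (P @ Q) = walk_verts tgt a P @ map tgt Q"
  by (simp add: walk_verts_def)

lemma walk_verts_take: "walk_verts tgt a (take n P) = take (Suc n) (walk_verts tgt a P)"
  by (simp add: walk_verts_def take_map)

lemma map_tgt_drop: "map tgt (drop n P) = drop (Suc n) (walk_verts tgt a P)"
  by (simp add: walk_verts_def drop_map)

lemma length_walk_verts [simp]: "length (walk_verts tgt a P) = Suc (length P)"
  by (simp add: walk_verts_def)

lemma walk_verts_not_Nil [simp]: "walk_verts tgt a P \<noteq> []"
  by (simp add: walk_verts_def)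

lemma last_walk_verts_take:
  "n \<le> length P \<Longrightarrow> last (walk_verts tgt a (take n P)) = walk_verts tgt a P ! n"
  by (simp add: walk_verts_take last_conv_nth min_def)

lemma set_map_tgt_drop: "set (map tgt (drop n es)) \<subseteq> set (walk_verts tgt a es)"
  unfolding map_tgt_drop[of tgt n es a] by (rule set_drop_subset)

lemma set_walk_verts_take_append:
  "set (walk_verts tgt a (take n es @ es')) \<subseteq> set (walk_verts tgt a es) \<union> set (map tgt es')"
  by (auto simp: walk_verts_append walk_verts_take dest: in_set_takeD)

lemma in_map_tgt_drop_iff:
  "v \<in> set (map tgt (drop n es)) \<longleftrightarrow> (\<exists>p. n < p \<and> p \<le> length es \<and> walk_verts tgt a es ! p = v)"
  unfolding map_tgt_drop[of tgt n es a] in_set_drop_iff by (simp add: Suc_le_eq less_Suc_eq_le)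

lemma is_walk_append_iff:
  "is_walk src tgt x (es @ es') y \<longleftrightarrow> (\<exists>z. is_walk src tgt x es z \<and> is_walk src tgt z es' y)"
  by (induction es arbitrary: x) auto

lemma is_walk_take:
  "is_walk src tgt x es y \<Longrightarrow> n \<le> length es \<Longrightarrow>
   is_walk src tgt x (take n es) (walk_verts tgt x es ! n)"
proof (induction es arbitrary: x n)
  case (Cons e es)
  then show ?case by (cases n) (auto simp: walk_verts_def)
qed (simp add: walk_verts_def)

lemma is_walk_drop:
  "is_walk src tgt x es y \<Longrightarrow> n \<le> length es \<Longrightarrow>
   is_walk src tgt (walk_verts tgt x es ! n) (drop n es) y"
proof (induction es arbitrary: x n)
  case (Cons e es)
  then show ?case by (cases n) (auto simp: walk_verts_def)
qed (simp add: walk_verts_def)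

lemma is_walk_splice:
  assumes "is_walk src tgt x es y" "is_walk src tgt x' es' y'" "n \<le> length es" "m \<le> length es'"
    and "walk_verts tgt x es ! n = walk_verts tgt x' es' ! m"
  shows "is_walk src tgt x (take n es @ drop m es') y'"
  using is_walk_take[OF assms(1,3)] is_walk_drop[OF assms(2,4)] assms(5)
  by (auto simp: is_walk_append_iff)

section \<open>Chronological loop erasure\<close>

definition erase_step :: "('e \<Rightarrow> 'v) \<Rightarrow> 'v \<Rightarrow> 'e list \<Rightarrow> 'e \<Rightarrow> 'e list" where
  "erase_step tgt a P e =
     (if tgt e \<in> set (walk_verts tgt a P)
      then take (length (takeWhile (\<lambda>u. u \<noteq> tgt e) (walk_verts tgt a P))) P else P @ [e])"

lemma walk_verts_erase_step:
  "walk_verts tgt a (erase_step tgt a P e) =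
     (if tgt e \<in> set (walk_verts tgt a P)
      then takeWhile (\<lambda>u. u \<noteq> tgt e) (walk_verts tgt a P) @ [tgt e]
      else walk_verts tgt a P @ [tgt e])"
proof (cases "tgt e \<in> set (walk_verts tgt a P)")
  case True
  let ?vs = "walk_verts tgt a P" and ?p = "length (takeWhile (\<lambda>u. u \<noteq> tgt e) (walk_verts tgt a P))"
  have "?p < length ?vs" using True by (rule length_takeWhile_neq_less)
  then have "take (Suc ?p) ?vs = takeWhile (\<lambda>u. u \<noteq> tgt e) ?vs @ [tgt e]"
    using nth_length_takeWhile[of "\<lambda>u. u \<noteq> tgt e" ?vs]
    by (simp add: take_Suc_conv_app_nth takeWhile_eq_take[symmetric])
  then show ?thesis using True by (simp add: erase_step_def walk_verts_take)
qed (simp add: erase_step_def walk_verts_append)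

lemma distinct_erase_step:
  "distinct (walk_verts tgt a P) \<Longrightarrow> distinct (walk_verts tgt a (erase_step tgt a P e))"
  by (auto simp: walk_verts_erase_step dest: set_takeWhileD)

lemma set_erase_step:
  "set (walk_verts tgt a (erase_step tgt a P e)) \<subseteq> set (walk_verts tgt a P) \<union> {tgt e}"
  by (auto simp: walk_verts_erase_step dest: set_takeWhileD)

lemma last_erase_step: "last (walk_verts tgt a (erase_step tgt a P e)) = tgt e"
  by (simp add: walk_verts_erase_step)

lemma erase_step_append_cut:
  assumes "tgt e \<in> set (walk_verts tgt a P)"
  shows "erase_step tgt a (P @ Q) e = erase_step tgt a P e"
proof -
  let ?p = "length (takeWhile (\<lambda>u. u \<noteq> tgt e) (walk_verts tgt a P))"
  have "?p < Suc (length P)" using length_takeWhile_neq_less[OF assms] by simp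
  then show ?thesis using assms by (simp add: erase_step_def walk_verts_append)
qed

lemma foldl_erase_step_distinct:
  "distinct (walk_verts tgt a P) \<Longrightarrow> distinct (walk_verts tgt a (foldl (erase_step tgt a) P es))"
  by (induction es arbitrary: P) (auto simp: distinct_erase_step)

lemma foldl_erase_step_set:
  "set (walk_verts tgt a (foldl (erase_step tgt a) P es))
     \<subseteq> set (walk_verts tgt a P) \<union> set (map tgt es)"
proof (induction es arbitrary: P)
  case (Cons e es)
  show ?case using Cons.IH[of "erase_step tgt a P e"] set_erase_step[of tgt a P e] by auto
qed simp

lemma foldl_erase_step_last:
  "last (walk_verts tgt a (foldl (erase_step tgt a) P es)) = last (walk_verts tgt a (P @ es))"
proof (induction es arbitrary: P)
  case (Cons e es)
  then show ?case
    using last_erase_step[of tgt a P e] by (cases es rule: rev_cases) (auto simp: walk_verts_append)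
qed simp

lemma foldl_erase_step_self_avoiding:
  "distinct (walk_verts tgt a (P @ es)) \<Longrightarrow> foldl (erase_step tgt a) P es = P @ es"
proof (induction es arbitrary: P)
  case (Cons e es)
  then have "erase_step tgt a P e = P @ [e]" by (simp add: erase_step_def walk_verts_append)
  then show ?case using Cons.IH[of "P @ [e]"] Cons.prems by simp
qed simp

lemma foldl_erase_step_keeps_prefix:
  assumes "set (map tgt es) \<inter> set (walk_verts tgt a P) = {}"
  shows "\<exists>Q. foldl (erase_step tgt a) (P @ Q0) es = P @ Q"
  using assms
proof (induction es arbitrary: Q0)
  case (Cons e es)
  have "tgt e \<notin> set (walk_verts tgt a P)" using Cons.prems by auto
  then have "takeWhile (\<lambda>u. u \<noteq> tgt e) (walk_verts tgt a (P @ Q0))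
      = walk_verts tgt a P @ takeWhile (\<lambda>u. u \<noteq> tgt e) (map tgt Q0)"
    unfolding walk_verts_append by (intro takeWhile_append2) auto
  then have "\<exists>Q1. erase_step tgt a (P @ Q0) e = P @ Q1"
    by (simp add: erase_step_def)
  then show ?case using Cons.IH Cons.prems by fastforce
qed simp

lemma distinct_take_le_j:
  assumes "\<not> distinct vs"
  shows "distinct (take (le_j vs) vs)"
proof -
  have "vs ! p \<noteq> vs ! q" if "p < q" "q < le_j vs" for p q
  proof
    assume "vs ! p = vs ! q"
    moreover have "q < length vs" using that le_j_props[OF assms] by simp
    ultimately have "le_j vs \<le> q" unfolding le_j_def using that(1) by (intro Least_le) blast
    then show False using that(2) by simp
  qed
  then show ?thesis by (auto simp: distinct_conv_nth) (metis linorder_neqE_nat)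
qed

lemma foldl_erase_step_first_loop:
  assumes "\<not> distinct (walk_verts tgt a es)"
  defines "i \<equiv> le_i (walk_verts tgt a es)" and "j \<equiv> le_j (walk_verts tgt a es)"
  shows "foldl (erase_step tgt a) [] es = foldl (erase_step tgt a) [] (take i es @ drop j es)"
proof -
  let ?vs = "walk_verts tgt a es"
  have ij: "i < j" "j \<le> length es" "?vs ! i = ?vs ! j"
    using le_j_props[OF assms(1)] le_i_props[OF assms(1)] by (auto simp: i_def j_def)
  have distinct_j: "distinct (take j ?vs)"
    using distinct_take_le_j[OF assms(1)] by (simp add: j_def)
  obtain j' where j': "j = Suc j'" using ij by (cases j) auto
  have es: "es = take j' es @ es ! j' # drop j es"
    using ij j' by (simp add: id_take_nth_drop)
  have prefix_j: "foldl (erase_step tgt a) [] (take j' es) = take j' es"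
    using foldl_erase_step_self_avoiding[of tgt a "[]" "take j' es"] distinct_j j'
    by (simp add: walk_verts_take)
  have "tgt (es ! j') = ?vs ! j" using ij j' by (simp add: walk_verts_def)
  also have "\<dots> = take j ?vs ! i" using ij by simp
  finally have tgt_j: "tgt (es ! j') = take j ?vs ! i" .
  have i_less: "i < length (take j ?vs)" using ij by simp
  have verts_j': "walk_verts tgt a (take j' es) = take j ?vs" by (simp add: walk_verts_take j')
  have step_j: "erase_step tgt a (take j' es) (es ! j') = take i es"
    using nth_mem[OF i_less] ij j'
    unfolding erase_step_def verts_j' tgt_j length_takeWhile_neq_nth[OF distinct_j i_less] by simp
  have "take (Suc i) ?vs = take (Suc i) (take j ?vs)" using ij by simp
  then have "distinct (walk_verts tgt a ([] @ take i es))"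
    using distinct_j by (metis append_Nil distinct_take walk_verts_take)
  then have prefix_i: "foldl (erase_step tgt a) [] (take i es) = take i es"
    using foldl_erase_step_self_avoiding by fastforce
  have "foldl (erase_step tgt a) [] es = foldl (erase_step tgt a) (take i es) (drop j es)"
    by (subst es) (simp add: prefix_j step_j)
  also have "\<dots> = foldl (erase_step tgt a) [] (take i es @ drop j es)"
    by (simp add: prefix_i)
  finally show ?thesis .
qed

lemma loop_erase_foldl: "loop_erase tgt a es = foldl (erase_step tgt a) [] es"
proof (induction tgt a es rule: loop_erase.induct)
  case (1 tgt a es)
  show ?case
  proof (cases "distinct (walk_verts tgt a es)")
    case True
    then show ?thesis
      using foldl_erase_step_self_avoiding[of tgt a "[]" es] by (simp add: loop_erase.simps)
  next
    case False
    then show ?thesis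
      using 1[OF False] foldl_erase_step_first_loop[OF False] by (subst loop_erase.simps) simp
  qed
qed

lemma distinct_loop_erase: "distinct (walk_verts tgt a (loop_erase tgt a es))"
  unfolding loop_erase_foldl by (rule foldl_erase_step_distinct) (simp add: walk_verts_def)

lemma set_loop_erase: "set (walk_verts tgt a (loop_erase tgt a es)) \<subseteq> set (walk_verts tgt a es)"
  using foldl_erase_step_set[of tgt a "[]" es] by (auto simp: loop_erase_foldl walk_verts_def)

lemma last_loop_erase: "last (walk_verts tgt a (loop_erase tgt a es)) = last (walk_verts tgt a es)"
  using foldl_erase_step_last[of tgt a "[]" es] by (simp add: loop_erase_foldl)

lemma loop_erase_append:
  "loop_erase tgt a (es @ es') = foldl (erase_step tgt a) (loop_erase tgt a es) es'"
  by (simp add: loop_erase_foldl)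

lemma loop_erase_append_avoiding:
  assumes "set (map tgt es') \<inter> set (walk_verts tgt a (loop_erase tgt a es)) = {}"
  shows "\<exists>Q. loop_erase tgt a (es @ es') = loop_erase tgt a es @ Q"
  using foldl_erase_step_keeps_prefix[OF assms, of "[]"] by (simp add: loop_erase_foldl)

definition last_visit :: "('e \<Rightarrow> 'v) \<Rightarrow> 'v \<Rightarrow> 'e list \<Rightarrow> 'v \<Rightarrow> nat" where
  "last_visit tgt a es v = (GREATEST n. n \<le> length es \<and> walk_verts tgt a es ! n = v)"

lemma last_visit:
  assumes "v \<in> set (walk_verts tgt a es)"
  shows "last_visit tgt a es v \<le> length es" and "walk_verts tgt a es ! last_visit tgt a es v = v"
    and "v \<notin> set (map tgt (drop (last_visit tgt a es v) es))"
proof -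
  obtain n where "n \<le> length es" "walk_verts tgt a es ! n = v"
    using assms by (auto simp: in_set_conv_nth less_Suc_eq_le)
  then have "last_visit tgt a es v \<le> length es \<and> walk_verts tgt a es ! last_visit tgt a es v = v"
    unfolding last_visit_def
    using GreatestI_nat[of "\<lambda>n. n \<le> length es \<and> walk_verts tgt a es ! n = v" n "length es"] by auto
  moreover have "p \<le> last_visit tgt a es v" if "p \<le> length es" "walk_verts tgt a es ! p = v" for p
    unfolding last_visit_def using that by (intro Greatest_le_nat[where b = "length es"]) auto
  ultimately show "last_visit tgt a es v \<le> length es"
    "walk_verts tgt a es ! last_visit tgt a es v = v"
    "v \<notin> set (map tgt (drop (last_visit tgt a es v) es))"
    unfolding in_map_tgt_drop_iff[where a = a] by (auto simp: not_le[symmetric])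
qed

lemma last_visit_eqI:
  assumes "n \<le> length es" "walk_verts tgt a es ! n = v" "v \<notin> set (map tgt (drop n es))"
  shows "last_visit tgt a es v = n"
  unfolding last_visit_def
proof (rule Greatest_equality)
  show "\<And>p. p \<le> length es \<and> walk_verts tgt a es ! p = v \<Longrightarrow> p \<le> n"
    using assms(3) unfolding in_map_tgt_drop_iff[where a = a] by (auto simp: not_le[symmetric])
qed (use assms in simp)

lemma loop_erase_last_visit:
  assumes "v \<in> set (walk_verts tgt a (loop_erase tgt a es))"
  defines "n \<equiv> last_visit tgt a es v"
  shows "set (map tgt (drop n es)) \<inter> set (walk_verts tgt a (loop_erase tgt a (take n es))) = {}"
proof (rule ccontr)
  \<comment> \<open>A return of the tail to LE up to v cuts v off, and v is never visited again.\<close>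
  let ?P = "loop_erase tgt a (take n es)"
  assume "set (map tgt (drop n es)) \<inter> set (walk_verts tgt a ?P) \<noteq> {}"
  then have "\<exists>x\<in>set (drop n es). tgt x \<in> set (walk_verts tgt a ?P)" by auto
  then obtain \<beta>1 e \<beta>2 where split: "drop n es = \<beta>1 @ e # \<beta>2"
    and hit: "tgt e \<in> set (walk_verts tgt a ?P)"
    and "\<forall>x\<in>set \<beta>1. tgt x \<notin> set (walk_verts tgt a ?P)"
    by (rule split_list_first_propE)
  then have avoid: "set (map tgt \<beta>1) \<inter> set (walk_verts tgt a ?P) = {}" by auto
  have "v \<in> set (walk_verts tgt a es)" using assms(1) set_loop_erase by fast
  note n = last_visit[OF this, folded n_def]
  have last_P: "last (walk_verts tgt a ?P) = v"
    using n by (simp add: last_loop_erase last_walk_verts_take)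
  have "v \<notin> set (map tgt (\<beta>1 @ e # \<beta>2))" using n(3) split by simp
  then have "tgt e \<noteq> v" "v \<notin> set (map tgt \<beta>2)" by auto
  obtain Q where "loop_erase tgt a (take n es @ \<beta>1) = ?P @ Q"
    using loop_erase_append_avoiding[OF avoid] by blast
  then have "loop_erase tgt a ((take n es @ \<beta>1) @ [e]) = erase_step tgt a ?P e"
    using hit by (simp only: loop_erase_append foldl_Cons foldl_Nil erase_step_append_cut)
  moreover have "v \<notin> set (walk_verts tgt a (erase_step tgt a ?P e))"
    using last_notin_takeWhile_neq[OF distinct_loop_erase hit] last_P \<open>tgt e \<noteq> v\<close>
    by (simp add: walk_verts_erase_step hit)
  moreover have "es = ((take n es @ \<beta>1) @ [e]) @ \<beta>2"
    using split append_take_drop_id[of n es] by simp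
  then have "loop_erase tgt a es =
      foldl (erase_step tgt a) (loop_erase tgt a ((take n es @ \<beta>1) @ [e])) \<beta>2"
    using loop_erase_append[of tgt a "(take n es @ \<beta>1) @ [e]" \<beta>2] by (simp only:)
  ultimately have "v \<notin> set (walk_verts tgt a (loop_erase tgt a es))"
    using foldl_erase_step_set[of tgt a "erase_step tgt a ?P e" \<beta>2] \<open>v \<notin> set (map tgt \<beta>2)\<close> by auto
  then show False using assms(1) by contradiction
qed

section \<open>Products of walk series\<close>

definition walk_families ::
  "('e \<Rightarrow> 'v) \<Rightarrow> ('e \<Rightarrow> 'v) \<Rightarrow> ('v \<times> 'v) list \<Rightarrow> 'e multiset \<Rightarrow> 'e list list set" where
  "walk_families src tgt cs m =
     {ps. list_all2 (\<lambda>(x, y) es. is_walk src tgt x es y) cs ps \<and> sum_list (map mset ps) = m}"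

lemma finite_walk_families: "finite (walk_families src tgt cs m)"
proof (rule finite_subset)
  show "walk_families src tgt cs m \<subseteq> {ps. set ps \<subseteq> {xs. mset xs \<subseteq># m} \<and> length ps = length cs}"
    by (auto simp: walk_families_def list_all2_lengthD dest: mset_subset_eq_sum_list[of _ _ mset])
qed (simp add: finite_lists_length_eq finite_lists_mset_subset_eq)

lemma walk_families_Cons:
  "walk_families src tgt ((x, y) # cs) m =
     (\<lambda>(es, ps). es # ps) ` (\<Union>m'\<in>{m'. m' \<subseteq># m}.
        {es. is_walk src tgt x es y \<and> mset es = m'} \<times> walk_families src tgt cs (m - m'))"
  by (auto simp: walk_families_def list_all2_Cons1 image_iff)

lemma card_walk_families_Cons:
  "card (walk_families src tgt ((x, y) # cs) m) =
     (\<Sum>m'\<in>{m'. m' \<subseteq># m}. card {es. is_walk src tgt x es y \<and> mset es = m'} *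
        card (walk_families src tgt cs (m - m')))"
proof -
  have "inj (\<lambda>(es :: 'e list, ps). es # ps)" by (auto simp: inj_def)
  moreover have "finite {es. is_walk src tgt x es y \<and> mset es = m'}" for m'
    by (rule finite_subset[OF _ finite_lists_mset_subset_eq[of m']]) auto
  ultimately show ?thesis
    unfolding walk_families_Cons
    by (subst card_image, simp add: inj_on_def)
       (subst card_UN_disjoint,
        auto simp: finite_submultisets finite_walk_families card_cartesian_product)
qed

lemma mps_prod_list_walk_series:
  "mps_prod_list (map (\<lambda>(x, y). walk_series src tgt x y) cs) m =
     int (card (walk_families src tgt cs m))"
proof (induction cs arbitrary: m)
  case Nil
  have "walk_families src tgt [] m = (if m = {#} then {[]} else {})"
    by (auto simp: walk_families_def)
  then show ?case by (simp add: mps_prod_list_def mps_one_def)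
next
  case (Cons c cs)
  then show ?case
    by (cases c) (simp add: mps_prod_list_def mps_mult_def walk_series_def card_walk_families_Cons)
qed

section \<open>The sign-reversing involution\<close>

locale walk_network =
  fixes src tgt :: "'e \<Rightarrow> 'v" and k :: nat and a b :: "nat \<Rightarrow> 'v"
begin

definition families :: "(nat \<Rightarrow> nat) \<Rightarrow> 'e multiset \<Rightarrow> 'e list list set" where
  "families \<sigma> m = walk_families src tgt (map (\<lambda>i. (a i, b (\<sigma> i))) [0..<k]) m"

lemma families_iff:
  "ps \<in> families \<sigma> m \<longleftrightarrow>
     length ps = k \<and> (\<forall>i<k. is_walk src tgt (a i) (ps ! i) (b (\<sigma> i))) \<and> sum_list (map mset ps) = m"
  by (auto simp: families_def walk_families_def list_all2_conv_all_nth)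

lemma finite_families: "finite (families \<sigma> m)"
  by (simp add: families_def finite_walk_families)

definition verts :: "'e list list \<Rightarrow> nat \<Rightarrow> 'v list" where
  "verts ps j = walk_verts tgt (a j) (ps ! j)"

definition erased_verts :: "'e list list \<Rightarrow> nat \<Rightarrow> 'v list" where
  "erased_verts ps i = walk_verts tgt (a i) (loop_erase tgt (a i) (ps ! i))"

definition conflict :: "'e list list \<Rightarrow> nat \<Rightarrow> nat \<Rightarrow> bool" where
  "conflict ps i j \<longleftrightarrow> i < j \<and> j < k \<and> set (verts ps j) \<inter> set (erased_verts ps i) \<noteq> {}"

definition visited_after :: "'e list list \<Rightarrow> nat \<Rightarrow> 'v \<Rightarrow> bool" where
  "visited_after ps i u \<longleftrightarrow> (\<exists>j. i < j \<and> j < k \<and> u \<in> set (verts ps j))"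

definition first_conflict :: "'e list list \<Rightarrow> nat" where
  "first_conflict ps = (LEAST i. \<exists>j. conflict ps i j)"

definition conflict_vertex :: "'e list list \<Rightarrow> 'v" where
  "conflict_vertex ps =
     the (find (visited_after ps (first_conflict ps)) (erased_verts ps (first_conflict ps)))"

definition conflict_partner :: "'e list list \<Rightarrow> nat" where
  "conflict_partner ps =
     (LEAST j. first_conflict ps < j \<and> j < k \<and> conflict_vertex ps \<in> set (verts ps j))"

definition swap_tails :: "'e list list \<Rightarrow> 'e list list" where
  "swap_tails ps =
     (let i = first_conflict ps; j = conflict_partner ps; v = conflict_vertex ps;
          n = last_visit tgt (a i) (ps ! i) v; m = last_visit tgt (a j) (ps ! j) v
      in ps[i := take n (ps ! i) @ drop m (ps ! j), j := take m (ps ! j) @ drop n (ps ! i)])"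

end

locale conflicting_family = walk_network src tgt k a b
  for src tgt :: "'e \<Rightarrow> 'v" and k a b +
  fixes ps :: "'e list list"
  assumes length_ps: "length ps = k" and has_conflict: "\<exists>i j. conflict ps i j"
begin

abbreviation "i0 \<equiv> first_conflict ps"
abbreviation "j0 \<equiv> conflict_partner ps"
abbreviation "v0 \<equiv> conflict_vertex ps"
abbreviation "n0 \<equiv> last_visit tgt (a i0) (ps ! i0) v0"
abbreviation "m0 \<equiv> last_visit tgt (a j0) (ps ! j0) v0"
abbreviation "P0 \<equiv> loop_erase tgt (a i0) (take n0 (ps ! i0))"

lemma no_conflict_before_first: "i < i0 \<Longrightarrow> \<not> conflict ps i j"
  using not_less_Least[of i "\<lambda>i. \<exists>j. conflict ps i j"] by (auto simp: first_conflict_def)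

lemma find_conflict_vertex: "find (visited_after ps i0) (erased_verts ps i0) = Some v0"
proof -
  have "\<exists>j. conflict ps i0 j"
    unfolding first_conflict_def using has_conflict by (rule LeastI_ex)
  then have "find (visited_after ps i0) (erased_verts ps i0) \<noteq> None"
    by (auto simp: conflict_def visited_after_def find_None_iff)
  then show ?thesis by (auto simp: conflict_vertex_def)
qed

lemma conflict_vertex_erased: "v0 \<in> set (erased_verts ps i0)"
  and visited_after_conflict_vertex: "visited_after ps i0 v0"
  using find_conflict_vertex by (auto simp: find_Some_iff)

lemma conflict_partner: "i0 < j0" "j0 < k" "v0 \<in> set (verts ps j0)"
proof -
  have "i0 < j0 \<and> j0 < k \<and> v0 \<in> set (verts ps j0)"
    unfolding conflict_partner_def
    by (rule LeastI_ex) (use visited_after_conflict_vertex in \<open>auto simp: visited_after_def\<close>)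
  then show "i0 < j0" "j0 < k" "v0 \<in> set (verts ps j0)" by auto
qed

lemma before_conflict_partner: "i0 < j \<Longrightarrow> j < j0 \<Longrightarrow> v0 \<notin> set (verts ps j)"
  using conflict_partner(2) not_less_Least[of j "\<lambda>j. i0 < j \<and> j < k \<and> v0 \<in> set (verts ps j)"]
  by (auto simp: conflict_partner_def)

lemma last_visit_i0:
  "n0 \<le> length (ps ! i0)" "walk_verts tgt (a i0) (ps ! i0) ! n0 = v0"
  "v0 \<notin> set (map tgt (drop n0 (ps ! i0)))"
proof -
  have "v0 \<in> set (walk_verts tgt (a i0) (ps ! i0))"
    using conflict_vertex_erased set_loop_erase[of tgt "a i0" "ps ! i0"]
    unfolding erased_verts_def by blast
  then show "n0 \<le> length (ps ! i0)" "walk_verts tgt (a i0) (ps ! i0) ! n0 = v0"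
    "v0 \<notin> set (map tgt (drop n0 (ps ! i0)))"
    by (rule last_visit)+
qed

lemma last_visit_j0:
  "m0 \<le> length (ps ! j0)" "walk_verts tgt (a j0) (ps ! j0) ! m0 = v0"
  "v0 \<notin> set (map tgt (drop m0 (ps ! j0)))"
  using conflict_partner(3) unfolding verts_def by (rule last_visit)+

lemma tail_i0_avoids_P0: "set (map tgt (drop n0 (ps ! i0))) \<inter> set (walk_verts tgt (a i0) P0) = {}"
  using loop_erase_last_visit conflict_vertex_erased by (simp add: erased_verts_def)

lemma last_P0: "last (walk_verts tgt (a i0) P0) = v0"
  using last_visit_i0 by (simp add: last_loop_erase last_walk_verts_take)

lemma butlast_snoc_P0: "butlast (walk_verts tgt (a i0) P0) @ [v0] = walk_verts tgt (a i0) P0"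
  using append_butlast_last_id[OF walk_verts_not_Nil, of tgt "a i0" P0] last_P0 by simp

lemma set_walk_verts_P0:
  "set (walk_verts tgt (a i0) P0) = insert v0 (set (butlast (walk_verts tgt (a i0) P0)))"
  using arg_cong[OF butlast_snoc_P0, of set] by simp

lemma walk_verts_P0_append:
  "walk_verts tgt (a i0) (P0 @ Q) = butlast (walk_verts tgt (a i0) P0) @ v0 # map tgt Q"
  using arg_cong[OF butlast_snoc_P0, of "\<lambda>vs. vs @ map tgt Q"] by (simp add: walk_verts_append)

lemma erased_verts_i0:
  "\<exists>Q. erased_verts ps i0 = butlast (walk_verts tgt (a i0) P0) @ v0 # map tgt Q"
proof -
  obtain Q where "loop_erase tgt (a i0) (take n0 (ps ! i0) @ drop n0 (ps ! i0)) = P0 @ Q"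
    using loop_erase_append_avoiding[OF tail_i0_avoids_P0] by blast
  then show ?thesis by (auto simp: erased_verts_def walk_verts_P0_append)
qed

lemma not_visited_before_conflict_vertex:
  assumes "u \<in> set (butlast (walk_verts tgt (a i0) P0))"
  shows "\<not> visited_after ps i0 u"
proof -
  obtain Q where Q: "erased_verts ps i0 = butlast (walk_verts tgt (a i0) P0) @ v0 # map tgt Q"
    using erased_verts_i0 by blast
  have "distinct (erased_verts ps i0)" by (simp add: erased_verts_def distinct_loop_erase)
  then have v0: "v0 \<notin> set (butlast (walk_verts tgt (a i0) P0))" by (simp add: Q)
  have "find (visited_after ps i0) (butlast (walk_verts tgt (a i0) P0) @ v0 # map tgt Q) = Some v0"
    using find_conflict_vertex by (simp only: Q)
  then show ?thesis using v0 assms by (rule find_append_Cons_SomeD)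
qed

lemma tail_j0_avoids_P0: "set (map tgt (drop m0 (ps ! j0))) \<inter> set (walk_verts tgt (a i0) P0) = {}"
proof (rule equals0I)
  fix u assume u: "u \<in> set (map tgt (drop m0 (ps ! j0))) \<inter> set (walk_verts tgt (a i0) P0)"
  moreover have "u \<noteq> v0" using u last_visit_j0(3) by blast
  ultimately have "u \<in> set (butlast (walk_verts tgt (a i0) P0))"
    using set_walk_verts_P0 by blast
  moreover have "visited_after ps i0 u"
    using u set_map_tgt_drop[of tgt m0 "ps ! j0" "a j0"] conflict_partner
    by (auto simp: visited_after_def verts_def)
  ultimately show False using not_visited_before_conflict_vertex by blast
qed

lemma swap_tails_eq:
  "swap_tails ps =
     ps[i0 := take n0 (ps ! i0) @ drop m0 (ps ! j0), j0 := take m0 (ps ! j0) @ drop n0 (ps ! i0)]"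
  by (simp add: swap_tails_def Let_def)

lemma length_swap_tails: "length (swap_tails ps) = k"
  by (simp add: swap_tails_eq length_ps)

lemma nth_swap_tails:
  "swap_tails ps ! i0 = take n0 (ps ! i0) @ drop m0 (ps ! j0)"
  "swap_tails ps ! j0 = take m0 (ps ! j0) @ drop n0 (ps ! i0)"
  "l \<noteq> i0 \<Longrightarrow> l \<noteq> j0 \<Longrightarrow> swap_tails ps ! l = ps ! l"
  using conflict_partner length_ps by (simp_all add: swap_tails_eq)

lemma verts_swap_tails_other:
  "l \<noteq> i0 \<Longrightarrow> l \<noteq> j0 \<Longrightarrow> verts (swap_tails ps) l = verts ps l"
  "l \<noteq> i0 \<Longrightarrow> l \<noteq> j0 \<Longrightarrow> erased_verts (swap_tails ps) l = erased_verts ps l"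
  by (simp_all add: verts_def erased_verts_def nth_swap_tails)

lemma set_verts_swap_tails_j0:
  "set (verts (swap_tails ps) j0) \<subseteq> set (verts ps j0) \<union> set (map tgt (drop n0 (ps ! i0)))"
  using set_walk_verts_take_append[of tgt "a j0" m0 "ps ! j0" "drop n0 (ps ! i0)"]
  by (simp add: verts_def nth_swap_tails)

lemma set_verts_swap_tails:
  "set (verts (swap_tails ps) j) \<subseteq> set (verts ps j) \<union> set (verts ps i0) \<union> set (verts ps j0)"
proof -
  have "set (verts (swap_tails ps) i0) \<subseteq> set (verts ps i0) \<union> set (verts ps j0)"
    using set_walk_verts_take_append[of tgt "a i0" n0 "ps ! i0" "drop m0 (ps ! j0)"]
      set_map_tgt_drop[of tgt m0 "ps ! j0" "a j0"]
    by (auto simp: verts_def nth_swap_tails)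
  moreover have "set (verts (swap_tails ps) j0) \<subseteq> set (verts ps j0) \<union> set (verts ps i0)"
    using set_verts_swap_tails_j0 set_map_tgt_drop[of tgt n0 "ps ! i0" "a i0"]
    by (auto simp: verts_def)
  ultimately show ?thesis
    using verts_swap_tails_other(1)[of j] by (cases "j = i0"; cases "j = j0") auto
qed

lemma conflict_vertex_in_verts_swap_tails: "v0 \<in> set (verts (swap_tails ps) j0)"
proof -
  have "last (walk_verts tgt (a j0) (take m0 (ps ! j0))) = v0"
    using last_visit_j0 by (simp add: last_walk_verts_take)
  then have "v0 \<in> set (walk_verts tgt (a j0) (take m0 (ps ! j0)))"
    using last_in_set walk_verts_not_Nil by metis
  then show ?thesis by (simp add: verts_def nth_swap_tails walk_verts_append)
qed

lemma erased_verts_swap_tails_i0: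
  "\<exists>Q. erased_verts (swap_tails ps) i0 = butlast (walk_verts tgt (a i0) P0) @ v0 # map tgt Q"
proof -
  obtain Q where "loop_erase tgt (a i0) (take n0 (ps ! i0) @ drop m0 (ps ! j0)) = P0 @ Q"
    using loop_erase_append_avoiding[OF tail_j0_avoids_P0] by blast
  then show ?thesis by (auto simp: erased_verts_def nth_swap_tails walk_verts_P0_append)
qed

lemma conflict_swap_tails: "conflict (swap_tails ps) i0 j0"
  using erased_verts_swap_tails_i0 conflict_vertex_in_verts_swap_tails conflict_partner
  by (fastforce simp: conflict_def)

lemma first_conflict_swap_tails: "first_conflict (swap_tails ps) = i0"
  unfolding first_conflict_def[of "swap_tails ps"]
proof (rule Least_equality)
  show "\<exists>j. conflict (swap_tails ps) i0 j" using conflict_swap_tails by blast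
next
  fix i assume "\<exists>j. conflict (swap_tails ps) i j"
  then obtain j u where j: "i < j" "j < k" and u: "u \<in> set (verts (swap_tails ps) j)"
    "u \<in> set (erased_verts (swap_tails ps) i)"
    by (auto simp: conflict_def)
  show "i0 \<le> i"
  proof (rule ccontr)
    assume "\<not> i0 \<le> i"
    then have "i < i0" "i < j0" using conflict_partner by auto
    then have "u \<in> set (erased_verts ps i)" using u(2) verts_swap_tails_other(2)[of i] by simp
    moreover have "u \<in> set (verts ps j) \<union> set (verts ps i0) \<union> set (verts ps j0)"
      using u(1) set_verts_swap_tails by blast
    ultimately have "conflict ps i j \<or> conflict ps i i0 \<or> conflict ps i j0"
      using j \<open>i < i0\<close> \<open>i < j0\<close> conflict_partner by (auto simp: conflict_def)
    then show False using no_conflict_before_first[OF \<open>i < i0\<close>] by blast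
  qed
qed

lemma not_visited_after_swap_tails:
  assumes "u \<in> set (butlast (walk_verts tgt (a i0) P0))"
  shows "\<not> visited_after (swap_tails ps) i0 u"
proof
  assume "visited_after (swap_tails ps) i0 u"
  then obtain j where j: "i0 < j" "j < k" "u \<in> set (verts (swap_tails ps) j)"
    by (auto simp: visited_after_def)
  have "u \<notin> set (map tgt (drop n0 (ps ! i0)))"
    using assms tail_i0_avoids_P0 set_walk_verts_P0 by blast
  then have "u \<in> set (verts ps j)"
    using j set_verts_swap_tails_j0 verts_swap_tails_other(1)[of j] by (cases "j = j0") auto
  then have "visited_after ps i0 u" using j by (auto simp: visited_after_def)
  then show False using not_visited_before_conflict_vertex[OF assms] by contradiction
qed

lemma conflict_vertex_swap_tails: "conflict_vertex (swap_tails ps) = v0"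
proof -
  obtain Q
    where Q: "erased_verts (swap_tails ps) i0 = butlast (walk_verts tgt (a i0) P0) @ v0 # map tgt Q"
    using erased_verts_swap_tails_i0 by blast
  have "visited_after (swap_tails ps) i0 v0"
    using conflict_vertex_in_verts_swap_tails conflict_partner by (auto simp: visited_after_def)
  then show ?thesis
    unfolding conflict_vertex_def[of "swap_tails ps"] first_conflict_swap_tails Q
    by (simp add: find_append_Cons not_visited_after_swap_tails)
qed

lemma conflict_partner_swap_tails: "conflict_partner (swap_tails ps) = j0"
  unfolding conflict_partner_def[of "swap_tails ps"] first_conflict_swap_tails
    conflict_vertex_swap_tails
proof (rule Least_equality)
  show "i0 < j0 \<and> j0 < k \<and> v0 \<in> set (verts (swap_tails ps) j0)"
    using conflict_partner conflict_vertex_in_verts_swap_tails by simp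
next
  fix j assume "i0 < j \<and> j < k \<and> v0 \<in> set (verts (swap_tails ps) j)"
  then show "j0 \<le> j"
    using before_conflict_partner[of j] verts_swap_tails_other(1)[of j] by (cases "j = j0") force+
qed

lemma last_visit_swap_tails:
  "last_visit tgt (a i0) (swap_tails ps ! i0) v0 = n0"
  "last_visit tgt (a j0) (swap_tails ps ! j0) v0 = m0"
  using last_visit_i0 last_visit_j0
  by (auto simp: nth_swap_tails walk_verts_append walk_verts_take nth_append intro!: last_visit_eqI)

lemma swap_tails_swap_tails: "swap_tails (swap_tails ps) = ps"
proof -
  have "swap_tails (swap_tails ps) = (swap_tails ps)[i0 := ps ! i0, j0 := ps ! j0]"
    unfolding swap_tails_def[of "swap_tails ps"] Let_def first_conflict_swap_tails
      conflict_partner_swap_tails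
      conflict_vertex_swap_tails last_visit_swap_tails
    using last_visit_i0(1) last_visit_j0(1) by (simp add: nth_swap_tails)
  also have "\<dots> = ps"
    using conflict_partner by (simp add: swap_tails_eq list_update_swap[of i0 j0])
  finally show ?thesis .
qed

lemma sum_list_mset_swap_tails: "sum_list (map mset (swap_tails ps)) = sum_list (map mset ps)"
proof -
  let ?x = "take n0 (ps ! i0) @ drop m0 (ps ! j0)" and ?y = "take m0 (ps ! j0) @ drop n0 (ps ! i0)"
  let ?S = "sum_list (map mset ps)" and ?S1 = "sum_list (map mset (ps[i0 := ?x]))"
    and ?S2 = "sum_list (map mset (ps[i0 := ?x, j0 := ?y]))"
  have ij: "i0 < length ps" "j0 < length ps" "i0 \<noteq> j0" using conflict_partner length_ps by auto
  have "?S2 + (mset (ps ! i0) + mset (ps ! j0)) = (?S2 + mset (ps ! j0)) + mset (ps ! i0)"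
    by (simp add: ac_simps)
  also have "?S2 + mset (ps ! j0) = ?S1 + mset ?y"
    using sum_list_map_update[of j0 "ps[i0 := ?x]" mset ?y] ij by simp
  also have "?S1 + mset ?y + mset (ps ! i0) = (?S1 + mset (ps ! i0)) + mset ?y"
    by (simp add: ac_simps)
  also have "?S1 + mset (ps ! i0) = ?S + mset ?x"
    by (rule sum_list_map_update[OF ij(1)])
  also have "?S + mset ?x + mset ?y = ?S + (mset (ps ! i0) + mset (ps ! j0))"
  proof -
    have "mset (ps ! i0) = mset (take n0 (ps ! i0)) + mset (drop n0 (ps ! i0))"
      "mset (ps ! j0) = mset (take m0 (ps ! j0)) + mset (drop m0 (ps ! j0))"
      by (simp_all flip: mset_append)
    then show ?thesis by (simp add: ac_simps)
  qed
  finally show ?thesis unfolding swap_tails_eq by simp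
qed

lemma permutes_compose_transpose:
  assumes "\<sigma> permutes {..<k}"
  shows "\<sigma> \<circ> Transposition.transpose i0 j0 permutes {..<k}"
    and "sign (\<sigma> \<circ> Transposition.transpose i0 j0) = - (sign \<sigma> :: int)"
proof -
  have "Transposition.transpose i0 j0 permutes {..<k}"
    using conflict_partner by (intro permutes_swap_id) auto
  then show "\<sigma> \<circ> Transposition.transpose i0 j0 permutes {..<k}"
    using assms by (rule permutes_compose)
  have "permutation \<sigma>" using assms permutation_permutes by blast
  then show "sign (\<sigma> \<circ> Transposition.transpose i0 j0) = - (sign \<sigma> :: int)"
    using conflict_partner by (simp add: sign_compose permutation_swap_id sign_swap_id)
qed

lemma swap_tails_families:
  assumes "ps \<in> families \<sigma> m"
  shows "swap_tails ps \<in> families (\<sigma> \<circ> Transposition.transpose i0 j0) m"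
proof -
  have walks: "\<forall>l<k. is_walk src tgt (a l) (ps ! l) (b (\<sigma> l))"
    using assms by (simp add: families_iff)
  then have "is_walk src tgt (a i0) (ps ! i0) (b (\<sigma> i0))"
    and "is_walk src tgt (a j0) (ps ! j0) (b (\<sigma> j0))"
    using conflict_partner by auto
  then have "is_walk src tgt (a i0) (swap_tails ps ! i0) (b (\<sigma> j0))"
    and "is_walk src tgt (a j0) (swap_tails ps ! j0) (b (\<sigma> i0))"
    using last_visit_i0 last_visit_j0 by (simp_all add: nth_swap_tails is_walk_splice)
  then show ?thesis
    using assms walks conflict_partner length_swap_tails nth_swap_tails(3) sum_list_mset_swap_tails
    by (auto simp: families_iff transpose_def)
qed

end

context walk_network
begin

lemma conflicting_families_cancel:
  "(\<Sum>\<sigma>\<in>{\<sigma>. \<sigma> permutes {..<k}}. sign \<sigma> * int (card {ps \<in> families \<sigma> m. \<exists>i j. conflict ps i j})) = 0"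
proof -
  define S where "S = (SIGMA \<sigma>:{\<sigma>. \<sigma> permutes {..<k}}. {ps \<in> families \<sigma> m. \<exists>i j. conflict ps i j})"
  define h where "h = (\<lambda>(\<sigma> :: nat \<Rightarrow> nat, ps).
    (\<sigma> \<circ> Transposition.transpose (first_conflict ps) (conflict_partner ps), swap_tails ps))"
  have "(\<Sum>x\<in>S. sign (fst x)) = (0 :: int)"
  proof (rule sum_involution_eq_0[where h = h])
    fix x assume "x \<in> S"
    then obtain \<sigma> ps where x: "x = (\<sigma>, ps)" "\<sigma> permutes {..<k}" "ps \<in> families \<sigma> m"
      and "\<exists>i j. conflict ps i j"
      by (auto simp: S_def)
    then interpret conflicting_family src tgt k a b ps
      by unfold_locales (auto simp: families_iff)
    have "sign \<sigma> \<noteq> (0 :: int)" by (simp add: sign_def)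
    then show "sign (fst (h x)) + sign (fst x) = (0 :: int)" "h x \<noteq> x"
      using permutes_compose_transpose(2)[OF x(2)] by (auto simp: h_def x(1))
    show "h x \<in> S"
      using permutes_compose_transpose(1)[OF x(2)] x swap_tails_families conflict_swap_tails
      by (auto simp: S_def h_def)
    show "h (h x) = x"
      by (simp add: h_def x(1) first_conflict_swap_tails conflict_partner_swap_tails
          swap_tails_swap_tails comp_assoc)
  qed
  moreover have "(\<Sum>\<sigma>\<in>{\<sigma>. \<sigma> permutes {..<k}}. \<Sum>ps\<in>{ps \<in> families \<sigma> m. \<exists>i j. conflict ps i j}. sign \<sigma>)
      = (\<Sum>(\<sigma>, ps)\<in>S. sign \<sigma>)"
    unfolding S_def by (rule sum.Sigma) (simp_all add: finite_permutations finite_families)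
  ultimately show ?thesis by (simp add: case_prod_beta' mult.commute)
qed

lemma family_series_eq:
  "family_series src tgt k a b \<sigma> m = int (card {ps \<in> families \<sigma> m. \<not> (\<exists>i j. conflict ps i j)})"
proof -
  have "{ps \<in> LE_families src tgt k a b \<sigma>. sum_list (map mset ps) = m}
      = {ps \<in> families \<sigma> m. \<not> (\<exists>i j. conflict ps i j)}"
    by (auto simp: LE_families_def families_iff conflict_def verts_def erased_verts_def)
  then show ?thesis by (simp add: family_series_def)
qed

lemma mps_det_walk_series:
  "mps_det k (\<lambda>i j. walk_series src tgt (a i) (b j)) m =
     (\<Sum>\<sigma>\<in>{\<sigma>. \<sigma> permutes {..<k}}. sign \<sigma> * int (card (families \<sigma> m)))"
proof -
  have "mps_prod_list (map (\<lambda>i. walk_series src tgt (a i) (b (\<sigma> i))) [0..<k]) m =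
      int (card (families \<sigma> m))"
    for \<sigma>
    using mps_prod_list_walk_series[of src tgt "map (\<lambda>i. (a i, b (\<sigma> i))) [0..<k]" m]
    by (simp add: families_def comp_def)
  then show ?thesis by (simp add: mps_det_def)
qed

lemma mps_det_walk_series_conflict_free:
  "mps_det k (\<lambda>i j. walk_series src tgt (a i) (b j)) m =
     (\<Sum>\<sigma>\<in>{\<sigma>. \<sigma> permutes {..<k}}.
        sign \<sigma> * int (card {ps \<in> families \<sigma> m. \<not> (\<exists>i j. conflict ps i j)}))"
proof -
  let ?good = "\<lambda>\<sigma>. {ps \<in> families \<sigma> m. \<not> (\<exists>i j. conflict ps i j)}"
  let ?bad = "\<lambda>\<sigma>. {ps \<in> families \<sigma> m. \<exists>i j. conflict ps i j}"
  have "card (families \<sigma> m) = card (?good \<sigma>) + card (?bad \<sigma>)" for \<sigma>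
  proof -
    have "card (?good \<sigma> \<union> ?bad \<sigma>) = card (?good \<sigma>) + card (?bad \<sigma>)"
      using finite_families[of \<sigma> m] by (intro card_Un_disjoint) auto
    moreover have "?good \<sigma> \<union> ?bad \<sigma> = families \<sigma> m" by blast
    ultimately show ?thesis by simp
  qed
  then show ?thesis
    using conflicting_families_cancel[of m]
    by (simp add: mps_det_walk_series algebra_simps sum.distrib)
qed

end

theorem theorem6p1:
  fixes src tgt :: "'e \<Rightarrow> 'v" and k :: nat and a b :: "nat \<Rightarrow> 'v"
  assumes "inj_on a {..<k}" and "inj_on b {..<k}"
  shows "mps_det k (\<lambda>i j. walk_series src tgt (a i) (b j)) =
         (\<lambda>m. \<Sum>\<sigma>\<in>{\<sigma>. \<sigma> permutes {..<k}}. of_int (sign \<sigma>) * family_series src tgt k a b \<sigma> m)"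
proof
  fix m
  interpret walk_network src tgt k a b .
  show "mps_det k (\<lambda>i j. walk_series src tgt (a i) (b j)) m =
      (\<Sum>\<sigma>\<in>{\<sigma>. \<sigma> permutes {..<k}}. of_int (sign \<sigma>) * family_series src tgt k a b \<sigma> m)"
    by (simp add: mps_det_walk_series_conflict_free family_series_eq)
qed

end
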